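(* Let $X_1,X_2,\dots$ be i.i.d. $\mathbb{Z}$-valued random variables and $S_n=\sum_{j=1}^nX_j$. For every $N\in\mathbb{N}\setminus\{1\}$ and all $y_1,\dots,y_N\in\mathbb{Z}$ with $|y_n-y_{n+1}|\le1$ for $n=1,\dots,N-1$, $$\frac{1}{\sum_{i=0}^{N-1}p^{(N)}_i}\le\mathbb{P}^{(N)}_{\mathcal{R}}\Big(\bigcup_{n=1}^N\{\mathcal{R}^{(N)}_n=(y_n\bmod N)\}\Big)\le\frac{2}{\sum_{i=0}^{N-1}q^{(N)}_i},$$ where $p^{(N)}_0=q^{(N)}_0=1$ and, for $i\in\mathbb{N}$, $p^{(N)}_i=\max_{y\in\mathbb{Z},|y|\le i}P\{S_i\in[y]_N\}$, $q^{(N)}_i=\min_{y\in\mathbb{Z},|y|\le i}P\{S_i\in[y]_N\}$.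
   Context: $X_j$ live on $(\Omega,\mathcal{F},P)$. $[y]_N=\{y+kN:k\in\mathbb{Z}\}$. For $N\in\mathbb{N}$, $X^{(N)}_0$ is uniform on $\{0,\dots,N-1\}$ under $(\Omega_N,\mathcal{F}_N,\mu_N)$; $(b\bmod N)$ is the remainder of $b\in\mathbb{Z}$ divided by $N$; $\mathcal{R}^{(N)}_n=(X^{(N)}_0+S_n\bmod N)$; $\mathbb{P}^{(N)}_{\mathcal{R}}=\mu_N\times P$ (product measure). *)

theory Defs
  imports "HOL-Probability.Probability"
begin

definition psum :: "(nat \<Rightarrow> 'a \<Rightarrow> int) \<Rightarrow> nat \<Rightarrow> 'a \<Rightarrow> int" where
  "psum X n \<omega> = (\<Sum>j\<in>{1..n}. X j \<omega>)"

definition resclass :: "int \<Rightarrow> int \<Rightarrow> int set" where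
  "resclass N y = {y + k * N | k. True}"

definition pmax :: "'a measure \<Rightarrow> (nat \<Rightarrow> 'a \<Rightarrow> int) \<Rightarrow> nat \<Rightarrow> nat \<Rightarrow> real" where
  "pmax M X N i = (if i = 0 then 1 else
     Max ((\<lambda>y. measure M {\<omega> \<in> space M. psum X i \<omega> \<in> resclass (int N) y}) ` {- int i .. int i}))"

definition qmin :: "'a measure \<Rightarrow> (nat \<Rightarrow> 'a \<Rightarrow> int) \<Rightarrow> nat \<Rightarrow> nat \<Rightarrow> real" where
  "qmin M X N i = (if i = 0 then 1 else
     Min ((\<lambda>y. measure M {\<omega> \<in> space M. psum X i \<omega> \<in> resclass (int N) y}) ` {- int i .. int i}))"

end

theory Submission
  imports Defs
begin

text \<open>
  Put \<open>offset_n = (y_n - S_n) mod N\<close>. Given the path, the walk started at \<open>x \<in> {0..N-1}\<close> is at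
  \<open>y_n mod N\<close> at time \<open>n\<close> iff \<open>x = offset_n\<close>, so the probability in question is
  \<open>E |{offset_1, ..., offset_N}| / N\<close>.

  Grouping the times \<open>1..N\<close> by the first occurrence \<open>k\<close> of their offset gives
  \<open>N = \<Sum>_k 1{k first} #{m \<ge> k. offset_m = offset_k}\<close>. Whether \<open>k\<close> is a first occurrence depends
  on \<open>X_1, ..., X_k\<close> only, while \<open>offset_m = offset_k\<close> depends on \<open>X_(k+1), ..., X_m\<close> only and says
  \<open>S_m - S_k \<in> [y_m - y_k]_N\<close>; as \<open>|y_m - y_k| \<le> m - k\<close>, its probability lies between \<open>q_(m-k)\<close>
  and \<open>p_(m-k)\<close>. Taking expectations gives \<open>N \<le> E |{offset_n}| \<Sum>_i p_i\<close>, the lower bound.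

  With \<open>Q_t = \<Sum>_(i<t) q_i\<close>, the same identity and its mirror image for last occurrences give
  \<open>\<Sum>_k P(k first) Q_(N-k+1) \<le> N\<close> and \<open>\<Sum>_k P(k last) Q_k \<le> N\<close>. Since \<open>q_i \<le> 1/N\<close> once
  \<open>2i + 1 \<ge> N\<close>, \<open>Q_N \<le> Q_(N-k+1) + Q_l\<close> whenever \<open>k \<le> l\<close>; charging each value to its first
  occurrence \<open>k\<close> and its last occurrence \<open>l\<close> yields \<open>E |{offset_n}| Q_N \<le> 2N\<close>, the upper bound.
\<close>

section \<open>Events determined by finitely many coordinates\<close>

definition depends_on :: "('i \<Rightarrow> 'a \<Rightarrow> 'b) \<Rightarrow> 'i set \<Rightarrow> ('a \<Rightarrow> 'c) \<Rightarrow> bool" where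
  "depends_on X K f \<longleftrightarrow> (\<forall>\<omega> \<omega>'. (\<forall>i\<in>K. X i \<omega> = X i \<omega>') \<longrightarrow> f \<omega> = f \<omega>')"

lemma depends_on_comp: "depends_on X K f \<Longrightarrow> depends_on X K (\<lambda>\<omega>. g (f \<omega>))"
  unfolding depends_on_def by metis

lemma vimage_restrict_image_depends_on:
  assumes "depends_on X K P"
  shows "(\<lambda>\<omega>. \<lambda>i\<in>K. X i \<omega>) -` ((\<lambda>\<omega>. \<lambda>i\<in>K. X i \<omega>) ` {\<omega>\<in>S. P \<omega>}) \<inter> S = {\<omega>\<in>S. P \<omega>}"
proof safe
  fix \<omega> \<omega>' assume "\<omega>' \<in> S" "P \<omega>'" "(\<lambda>i\<in>K. X i \<omega>) = (\<lambda>i\<in>K. X i \<omega>')"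
  then have "\<forall>i\<in>K. X i \<omega> = X i \<omega>'" by (metis restrict_apply')
  with assms \<open>P \<omega>'\<close> show "P \<omega>" unfolding depends_on_def by metis
qed auto

lemma sets_PiM_count_space_countable:
  fixes A :: "('i \<Rightarrow> 'b::countable) set"
  assumes "finite K" "A \<subseteq> PiE K (\<lambda>_. UNIV)"
  shows "A \<in> sets (PiM K (\<lambda>_. count_space UNIV))"
proof (rule sets.countable)
  show "countable A"
    using countable_PiE[OF assms(1), of "\<lambda>_. UNIV::'b set"] assms(2) countable_subset by auto
  fix a assume "a \<in> A"
  then have "a \<in> PiE K (\<lambda>_. UNIV)" using assms(2) by auto
  then have "{a} = PiE K (\<lambda>i. {a i})"
    by (auto simp: PiE_iff extensional_def fun_eq_iff; metis)
  also have "\<dots> \<in> sets (PiM K (\<lambda>_. count_space UNIV))"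
    using assms(1) by (intro sets_PiM_I_finite) auto
  finally show "{a} \<in> sets (PiM K (\<lambda>_. count_space UNIV))" .
qed

lemma sets_Collect_depends_on:
  fixes X :: "'i \<Rightarrow> 'a \<Rightarrow> 'b::countable"
  assumes "finite K" "\<And>i. i \<in> K \<Longrightarrow> X i \<in> M \<rightarrow>\<^sub>M count_space UNIV" "depends_on X K P"
  shows "{\<omega>\<in>space M. P \<omega>} \<in> sets M"
proof -
  let ?T = "\<lambda>\<omega>. \<lambda>i\<in>K. X i \<omega>" and ?S = "{\<omega>\<in>space M. P \<omega>}"
  have "?T \<in> M \<rightarrow>\<^sub>M PiM K (\<lambda>_. count_space UNIV)"
    using assms(2) by (rule measurable_restrict)
  moreover have "?T ` ?S \<in> sets (PiM K (\<lambda>_. count_space UNIV))"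
    using assms(1) by (intro sets_PiM_count_space_countable) auto
  ultimately have "?T -` (?T ` ?S) \<inter> space M \<in> sets M"
    by (rule measurable_sets)
  then show ?thesis
    by (simp only: vimage_restrict_image_depends_on[OF assms(3)])
qed

lemma measurable_depends_on:
  fixes X :: "'i \<Rightarrow> 'a \<Rightarrow> 'b::countable"
  assumes "finite K" "\<And>i. i \<in> K \<Longrightarrow> X i \<in> M \<rightarrow>\<^sub>M count_space UNIV" "depends_on X K f"
  shows "f \<in> M \<rightarrow>\<^sub>M count_space UNIV"
proof (rule measurableI)
  fix A
  have "{\<omega>\<in>space M. f \<omega> \<in> A} \<in> sets M"
    using sets_Collect_depends_on[OF assms(1,2) depends_on_comp[OF assms(3)]] .
  then show "f -` A \<inter> space M \<in> sets M"
    by (simp add: vimage_def Int_def conj_commute)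
qed simp

lemma (in prob_space) prob_conj_depends_on_disjoint:
  fixes X :: "'i \<Rightarrow> 'a \<Rightarrow> 'b::countable"
  assumes indep: "indep_vars (\<lambda>_. count_space UNIV) X I"
    and KL: "finite K" "finite L" "K \<subseteq> I" "L \<subseteq> I" "K \<inter> L = {}"
    and P: "depends_on X K P" and Q: "depends_on X L Q"
  shows "prob {\<omega>\<in>space M. P \<omega> \<and> Q \<omega>} = prob {\<omega>\<in>space M. P \<omega>} * prob {\<omega>\<in>space M. Q \<omega>}"
proof -
  let ?TK = "\<lambda>\<omega>. \<lambda>i\<in>K. X i \<omega>" and ?TL = "\<lambda>\<omega>. \<lambda>i\<in>L. X i \<omega>"
  let ?P = "{\<omega>\<in>space M. P \<omega>}" and ?Q = "{\<omega>\<in>space M. Q \<omega>}"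
  have "indep_var (PiM K (\<lambda>_. count_space UNIV)) ?TK (PiM L (\<lambda>_. count_space UNIV)) ?TL"
    using KL by (intro indep_var_restrict[OF indep]) auto
  moreover have "?TK ` ?P \<in> sets (PiM K (\<lambda>_. count_space UNIV))"
    and "?TL ` ?Q \<in> sets (PiM L (\<lambda>_. count_space UNIV))"
    using KL by (auto intro!: sets_PiM_count_space_countable)
  ultimately have "prob ((\<lambda>\<omega>. (?TK \<omega>, ?TL \<omega>)) -` (?TK ` ?P \<times> ?TL ` ?Q) \<inter> space M)
      = prob (?TK -` (?TK ` ?P) \<inter> space M) * prob (?TL -` (?TL ` ?Q) \<inter> space M)"
    by (rule indep_varD)
  moreover have "(\<lambda>\<omega>. (?TK \<omega>, ?TL \<omega>)) -` (?TK ` ?P \<times> ?TL ` ?Q) \<inter> space M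
      = {\<omega>\<in>space M. P \<omega> \<and> Q \<omega>}"
    using vimage_restrict_image_depends_on[OF P, of "space M"]
      vimage_restrict_image_depends_on[OF Q, of "space M"] by blast
  ultimately show ?thesis
    by (simp only: vimage_restrict_image_depends_on[OF P] vimage_restrict_image_depends_on[OF Q])
qed

lemma (in prob_space) integral_sum_indicator:
  assumes "finite K" "\<And>k. k \<in> K \<Longrightarrow> A k \<in> events"
  shows "integrable M (\<lambda>\<omega>. \<Sum>k\<in>K. c k * indicator (A k) \<omega> :: real)"
    and "(\<integral>\<omega>. (\<Sum>k\<in>K. c k * indicator (A k) \<omega>) \<partial>M) = (\<Sum>k\<in>K. c k * prob (A k))"
proof -
  have int: "integrable M (\<lambda>\<omega>. c k * indicator (A k) \<omega> :: real)" if "k \<in> K" for k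
    using assms(2)[OF that] emeasure_finite[of "A k"]
    by (intro integrable_mult_right integrable_real_indicator) (auto simp: less_top[symmetric])
  then show "integrable M (\<lambda>\<omega>. \<Sum>k\<in>K. c k * indicator (A k) \<omega> :: real)"
    by (rule Bochner_Integration.integrable_sum)
  have "(\<integral>\<omega>. (\<Sum>k\<in>K. c k * indicator (A k) \<omega>) \<partial>M) = (\<Sum>k\<in>K. \<integral>\<omega>. c k * indicator (A k) \<omega> \<partial>M)"
    using int by (rule Bochner_Integration.integral_sum)
  also have "\<dots> = (\<Sum>k\<in>K. c k * prob (A k))"
    using assms(2) by (intro sum.cong refl) (simp add: Int_absorb2 sets.sets_into_space)
  finally show "(\<integral>\<omega>. (\<Sum>k\<in>K. c k * indicator (A k) \<omega>) \<partial>M) = (\<Sum>k\<in>K. c k * prob (A k))" .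
qed

lemma (in prob_space) integral_double_sum_indicator:
  assumes "finite K" "\<And>k. k \<in> K \<Longrightarrow> finite (L k)" "\<And>k m. k \<in> K \<Longrightarrow> m \<in> L k \<Longrightarrow> A k m \<in> events"
  shows "(\<integral>\<omega>. (\<Sum>k\<in>K. \<Sum>m\<in>L k. indicator (A k m) \<omega> :: real) \<partial>M) = (\<Sum>k\<in>K. \<Sum>m\<in>L k. prob (A k m))"
proof -
  have "(\<integral>\<omega>. (\<Sum>k\<in>K. \<Sum>m\<in>L k. 1 * indicator (A k m) \<omega> :: real) \<partial>M)
      = (\<Sum>k\<in>K. \<integral>\<omega>. (\<Sum>m\<in>L k. 1 * indicator (A k m) \<omega>) \<partial>M)"
    using assms by (intro Bochner_Integration.integral_sum integral_sum_indicator(1)) auto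
  also have "\<dots> = (\<Sum>k\<in>K. \<Sum>m\<in>L k. 1 * prob (A k m))"
    using assms by (intro sum.cong refl integral_sum_indicator(2)) auto
  finally show ?thesis by simp
qed

section \<open>Partial sums and residue classes\<close>

lemma sum_atLeastAtMost_shift_down:
  "k \<le> n \<Longrightarrow> (\<Sum>m\<in>{k..n}. f (m - k)) = (\<Sum>i<Suc (n - k). f i)"
  by (rule sum.reindex_bij_witness[of _ "\<lambda>i. i + k" "\<lambda>m. m - k"]) auto

lemma sum_atLeastAtMost_reflect:
  "(\<Sum>m\<in>{1..k::nat}. f (k - m)) = (\<Sum>i<k. f i)"
  by (rule sum.reindex_bij_witness[of _ "\<lambda>i. k - i" "\<lambda>m. k - m"]) auto

lemma psum_diff:
  assumes "a \<le> b"
  shows "psum X b \<omega> - psum X a \<omega> = (\<Sum>j\<in>{1..b - a}. X (a + j) \<omega>)"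
proof -
  have "{1..b} = {1..a} \<union> {a<..b}" using assms by auto
  then have "psum X b \<omega> = psum X a \<omega> + (\<Sum>j\<in>{a<..b}. X j \<omega>)"
    unfolding psum_def by (subst sum.union_disjoint[symmetric]) auto
  moreover have "(\<Sum>j\<in>{a<..b}. X j \<omega>) = (\<Sum>j\<in>{1..b - a}. X (a + j) \<omega>)"
    using assms by (intro sum.reindex_bij_witness[of _ "\<lambda>j. a + j" "\<lambda>j. j - a"]) auto
  ultimately show ?thesis by simp
qed

lemma depends_on_psum: "depends_on X {1..n} (psum X n)"
  unfolding depends_on_def psum_def by (auto intro!: sum.cong)

lemma mem_resclass_iff: "0 < N \<Longrightarrow> x \<in> resclass (int N) c \<longleftrightarrow> x mod int N = c mod int N"
proof
  assume "x \<in> resclass (int N) c"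
  then obtain k where "x = c + k * int N" by (auto simp: resclass_def)
  then show "x mod int N = c mod int N" by simp
next
  assume "0 < N" "x mod int N = c mod int N"
  then obtain k where "x - c = int N * k" by (metis dvd_def mod_eq_dvd_iff)
  then have "x = c + k * int N" by (simp add: algebra_simps)
  then show "x \<in> resclass (int N) c" by (auto simp: resclass_def)
qed

lemma pmax_nonneg: "0 \<le> pmax M X N i"
  unfolding pmax_def by (auto intro!: Max.coboundedI[THEN order_trans[rotated]])

lemma qmin_nonneg: "0 \<le> qmin M X N i"
  unfolding qmin_def by (auto intro!: Min.boundedI)

lemma one_le_sum_pmax: "0 < n \<Longrightarrow> 1 \<le> (\<Sum>i<n. pmax M X N i)"
  using sum_mono2[of "{..<n}" "{0}" "pmax M X N"] by (simp add: pmax_nonneg) (simp add: pmax_def)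

lemma one_le_sum_qmin: "0 < n \<Longrightarrow> 1 \<le> (\<Sum>i<n. qmin M X N i)"
  using sum_mono2[of "{..<n}" "{0}" "qmin M X N"] by (simp add: qmin_nonneg) (simp add: qmin_def)

section \<open>First and last occurrences of values\<close>

definition first_occurrences :: "('a::linorder \<Rightarrow> 'b) \<Rightarrow> 'a set \<Rightarrow> 'a set" where
  "first_occurrences V A = {k\<in>A. \<forall>j\<in>A. j < k \<longrightarrow> V j \<noteq> V k}"

definition last_occurrences :: "('a::linorder \<Rightarrow> 'b) \<Rightarrow> 'a set \<Rightarrow> 'a set" where
  "last_occurrences V A = {k\<in>A. \<forall>j\<in>A. k < j \<longrightarrow> V j \<noteq> V k}"

lemma bij_betw_first_occurrences:
  assumes "finite A"
  shows "bij_betw V (first_occurrences V A) (V ` A)"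
proof (rule bij_betw_imageI)
  show "inj_on V (first_occurrences V A)"
  proof (rule inj_onI)
    fix a b assume "a \<in> first_occurrences V A" "b \<in> first_occurrences V A" "V a = V b"
    then show "a = b"
      unfolding first_occurrences_def by (cases a b rule: linorder_cases) auto
  qed
  show "V ` first_occurrences V A = V ` A"
  proof
    show "V ` A \<subseteq> V ` first_occurrences V A"
    proof
      fix v assume "v \<in> V ` A"
      define k where "k = Min {k\<in>A. V k = v}"
      have k: "k \<in> A" "V k = v"
        using Min_in[of "{k\<in>A. V k = v}"] \<open>v \<in> V ` A\<close> assms by (auto simp: k_def)
      have "\<not> j < k" if "j \<in> A" "V j = v" for j
        using that assms by (auto simp: k_def not_less intro!: Min_le)
      then have "k \<in> first_occurrences V A"
        using k by (auto simp: first_occurrences_def)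
      then show "v \<in> V ` first_occurrences V A"
        using k by blast
    qed
  qed (auto simp: first_occurrences_def)
qed

lemma bij_betw_last_occurrences:
  assumes "finite A"
  shows "bij_betw V (last_occurrences V A) (V ` A)"
proof (rule bij_betw_imageI)
  show "inj_on V (last_occurrences V A)"
  proof (rule inj_onI)
    fix a b assume "a \<in> last_occurrences V A" "b \<in> last_occurrences V A" "V a = V b"
    then show "a = b"
      unfolding last_occurrences_def by (cases a b rule: linorder_cases) auto
  qed
  show "V ` last_occurrences V A = V ` A"
  proof
    show "V ` A \<subseteq> V ` last_occurrences V A"
    proof
      fix v assume "v \<in> V ` A"
      define k where "k = Max {k\<in>A. V k = v}"
      have k: "k \<in> A" "V k = v"
        using Max_in[of "{k\<in>A. V k = v}"] \<open>v \<in> V ` A\<close> assms by (auto simp: k_def)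
      have "\<not> k < j" if "j \<in> A" "V j = v" for j
        using that assms by (auto simp: k_def not_less intro!: Max_ge)
      then have "k \<in> last_occurrences V A"
        using k by (auto simp: last_occurrences_def)
      then show "v \<in> V ` last_occurrences V A"
        using k by blast
    qed
  qed (auto simp: last_occurrences_def)
qed

lemma sum_card_fibres_image:
  "finite A \<Longrightarrow> (\<Sum>v\<in>V ` A. card {m\<in>A. V m = v}) = card A"
  using sum.group[of A "V ` A" V "\<lambda>_. 1::nat"] by simp

lemma sum_first_occurrences_card_later:
  assumes "finite A"
  shows "(\<Sum>k\<in>first_occurrences V A. card {m\<in>A. k \<le> m \<and> V m = V k}) = card A"
proof -
  have "(\<Sum>k\<in>first_occurrences V A. card {m\<in>A. k \<le> m \<and> V m = V k})
      = (\<Sum>k\<in>first_occurrences V A. card {m\<in>A. V m = V k})"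
    by (intro sum.cong refl arg_cong[where f=card]) (auto simp: first_occurrences_def not_le)
  also have "\<dots> = card A"
    using sum.reindex_bij_betw[OF bij_betw_first_occurrences[OF assms], of "\<lambda>v. card {m\<in>A. V m = v}"]
      sum_card_fibres_image[OF assms] by simp
  finally show ?thesis .
qed

lemma sum_last_occurrences_card_earlier:
  assumes "finite A"
  shows "(\<Sum>k\<in>last_occurrences V A. card {m\<in>A. m \<le> k \<and> V m = V k}) = card A"
proof -
  have "(\<Sum>k\<in>last_occurrences V A. card {m\<in>A. m \<le> k \<and> V m = V k})
      = (\<Sum>k\<in>last_occurrences V A. card {m\<in>A. V m = V k})"
    by (intro sum.cong refl arg_cong[where f=card]) (auto simp: last_occurrences_def not_le)
  also have "\<dots> = card A"
    using sum.reindex_bij_betw[OF bij_betw_last_occurrences[OF assms], of "\<lambda>v. card {m\<in>A. V m = v}"]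
      sum_card_fibres_image[OF assms] by simp
  finally show ?thesis .
qed

text \<open>Each value of \<open>V\<close> is charged to its first occurrence \<open>k\<close> and to its last occurrence \<open>l \<ge> k\<close>.\<close>
lemma card_image_mult_le_sum_first_last:
  fixes \<phi> \<psi> :: "'a::linorder \<Rightarrow> real"
  assumes "finite A" and split: "\<And>k l. k \<in> A \<Longrightarrow> l \<in> A \<Longrightarrow> k \<le> l \<Longrightarrow> c \<le> \<phi> k + \<psi> l"
  shows "real (card (V ` A)) * c \<le> (\<Sum>k\<in>first_occurrences V A. \<phi> k) + (\<Sum>k\<in>last_occurrences V A. \<psi> k)"
proof -
  let ?F = "first_occurrences V A" and ?L = "last_occurrences V A"
  have bijF: "bij_betw (the_inv_into ?F V) (V ` A) ?F"
    by (rule bij_betw_the_inv_into[OF bij_betw_first_occurrences[OF assms(1)]])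
  have bijL: "bij_betw (the_inv_into ?L V) (V ` A) ?L"
    by (rule bij_betw_the_inv_into[OF bij_betw_last_occurrences[OF assms(1)]])
  have "real (card (V ` A)) * c = (\<Sum>v\<in>V ` A. c)"
    by simp
  also have "\<dots> \<le> (\<Sum>v\<in>V ` A. \<phi> (the_inv_into ?F V v) + \<psi> (the_inv_into ?L V v))"
  proof (rule sum_mono)
    fix v assume v: "v \<in> V ` A"
    define k l where "k = the_inv_into ?F V v" and "l = the_inv_into ?L V v"
    have k: "k \<in> ?F" "V k = v"
      using bijF v f_the_inv_into_f_bij_betw[OF bij_betw_first_occurrences[OF assms(1)] v]
      by (auto simp: k_def bij_betw_def)
    have l: "l \<in> ?L" "V l = v"
      using bijL v f_the_inv_into_f_bij_betw[OF bij_betw_last_occurrences[OF assms(1)] v]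
      by (auto simp: l_def bij_betw_def)
    have "k \<le> l"
      using k l by (auto simp: first_occurrences_def last_occurrences_def not_le[symmetric])
    then show "c \<le> \<phi> k + \<psi> l"
      using k l by (intro split) (auto simp: first_occurrences_def last_occurrences_def)
  qed
  also have "\<dots> = (\<Sum>k\<in>?F. \<phi> k) + (\<Sum>k\<in>?L. \<psi> k)"
    by (simp add: sum.distrib sum.reindex_bij_betw[OF bijF] sum.reindex_bij_betw[OF bijL])
  finally show ?thesis .
qed

section \<open>Partial sums of an i.i.d. sequence\<close>

locale iid_sequence = prob_space M for M :: "'a measure" +
  fixes X :: "nat \<Rightarrow> 'a \<Rightarrow> int"
  assumes indep: "indep_vars (\<lambda>_. count_space UNIV) X {1..}"
    and ident: "\<forall>j\<ge>1. distr M (count_space UNIV) (X j) = distr M (count_space UNIV) (X 1)"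
begin

lemma random_variable_X: "1 \<le> i \<Longrightarrow> X i \<in> M \<rightarrow>\<^sub>M count_space UNIV"
  using indep unfolding indep_vars_def by auto

lemma events_depends_on:
  "finite K \<Longrightarrow> K \<subseteq> {1..} \<Longrightarrow> depends_on X K P \<Longrightarrow> {\<omega>\<in>space M. P \<omega>} \<in> events"
  by (rule sets_Collect_depends_on) (auto intro!: random_variable_X)

lemma measurable_depends_on_X:
  "finite K \<Longrightarrow> K \<subseteq> {1..} \<Longrightarrow> depends_on X K f \<Longrightarrow> f \<in> M \<rightarrow>\<^sub>M count_space UNIV"
  by (rule measurable_depends_on) (auto intro!: random_variable_X)

abbreviation law :: "int measure" where
  "law \<equiv> distr M (count_space UNIV) (X 1)"

lemma distr_shifted_block:
  assumes "1 \<le> n"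
  shows "distr M (PiM {1..n} (\<lambda>_. law)) (\<lambda>\<omega>. \<lambda>j\<in>{1..n}. X (a + j) \<omega>) = PiM {1..n} (\<lambda>_. law)"
proof -
  let ?K = "{a+1..a+n}" and ?I = "{1..n}"
  have "indep_vars (\<lambda>_. count_space UNIV) X ?K"
    by (rule indep_vars_subset[OF indep]) auto
  then have "distr M (PiM ?K (\<lambda>_. count_space UNIV)) (\<lambda>\<omega>. \<lambda>i\<in>?K. X i \<omega>)
      = PiM ?K (\<lambda>i. distr M (count_space UNIV) (X i))"
    by (rule indep_vars_iff_distr_eq_PiM'[THEN iffD1, rotated 2]) (use assms in \<open>auto intro!: random_variable_X\<close>)
  also have "PiM ?K (\<lambda>i. distr M (count_space UNIV) (X i)) = PiM ?K (\<lambda>_. law)"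
  proof (rule PiM_cong[OF refl])
    fix i assume "i \<in> ?K"
    then have "1 \<le> i" by simp
    then show "distr M (count_space UNIV) (X i) = law" using ident by blast
  qed
  also have "distr M (PiM ?K (\<lambda>_. count_space UNIV)) (\<lambda>\<omega>. \<lambda>i\<in>?K. X i \<omega>)
      = distr M (PiM ?K (\<lambda>_. law)) (\<lambda>\<omega>. \<lambda>i\<in>?K. X i \<omega>)"
    by (rule distr_cong[OF refl _ refl]) (rule sets_PiM_cong, auto)
  finally have block: "distr M (PiM ?K (\<lambda>_. law)) (\<lambda>\<omega>. \<lambda>i\<in>?K. X i \<omega>) = PiM ?K (\<lambda>_. law)" .
  have reindex: "distr (PiM ?K (\<lambda>_. law)) (PiM ?I (\<lambda>_. law)) (\<lambda>\<omega>. \<lambda>j\<in>?I. \<omega> (a + j)) = PiM ?I (\<lambda>_. law)"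
    by (rule distr_PiM_reindex) (auto simp: inj_on_def intro!: prob_space_distr random_variable_X)
  have mK: "(\<lambda>\<omega>. \<lambda>i\<in>?K. X i \<omega>) \<in> M \<rightarrow>\<^sub>M PiM ?K (\<lambda>_. law)"
    by (intro measurable_restrict) (auto intro!: random_variable_X)
  have mI: "(\<lambda>\<omega>. \<lambda>j\<in>?I. \<omega> (a + j)) \<in> PiM ?K (\<lambda>_. law) \<rightarrow>\<^sub>M PiM ?I (\<lambda>_. law)"
    by (intro measurable_restrict measurable_component_singleton) auto
  have "distr M (PiM ?I (\<lambda>_. law)) (\<lambda>\<omega>. \<lambda>j\<in>?I. X (a + j) \<omega>) =
      distr M (PiM ?I (\<lambda>_. law)) ((\<lambda>\<omega>. \<lambda>j\<in>?I. \<omega> (a + j)) \<circ> (\<lambda>\<omega>. \<lambda>i\<in>?K. X i \<omega>))"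
    by (intro distr_cong) (auto simp: fun_eq_iff)
  also have "\<dots> = PiM ?I (\<lambda>_. law)"
    by (subst distr_distr[symmetric, OF mI mK]) (simp only: block reindex)
  finally show ?thesis .
qed

lemma prob_shifted_sum:
  "prob {\<omega>\<in>space M. (\<Sum>j\<in>{1..n}. X (a + j) \<omega>) \<in> R} = prob {\<omega>\<in>space M. psum X n \<omega> \<in> R}"
proof (cases "1 \<le> n")
  case False
  then show ?thesis by (simp add: psum_def)
next
  case True
  let ?P = "PiM {1..n} (\<lambda>_. law)"
  define S where "S = {t\<in>space ?P. (\<Sum>j\<in>{1..n}. t j) \<in> R}"
  have "S \<in> sets (PiM {1..n} (\<lambda>_. count_space UNIV))"
    unfolding S_def space_PiM by (rule sets_PiM_count_space_countable) auto
  moreover have "sets ?P = sets (PiM {1..n} (\<lambda>_. count_space UNIV))"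
    by (intro sets_PiM_cong) auto
  ultimately have S: "S \<in> sets ?P" by simp
  have "prob {\<omega>\<in>space M. (\<Sum>j\<in>{1..n}. X (b + j) \<omega>) \<in> R} = measure ?P S" for b
  proof -
    have m: "(\<lambda>\<omega>. \<lambda>j\<in>{1..n}. X (b + j) \<omega>) \<in> M \<rightarrow>\<^sub>M ?P"
      by (intro measurable_restrict) (auto intro!: random_variable_X)
    have "measure ?P S = prob ((\<lambda>\<omega>. \<lambda>j\<in>{1..n}. X (b + j) \<omega>) -` S \<inter> space M)"
      by (subst distr_shifted_block[OF True, of b, symmetric]) (rule measure_distr[OF m S])
    also have "(\<lambda>\<omega>. \<lambda>j\<in>{1..n}. X (b + j) \<omega>) -` S \<inter> space M
        = {\<omega>\<in>space M. (\<Sum>j\<in>{1..n}. X (b + j) \<omega>) \<in> R}"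
      using measurable_space[OF m] by (auto simp: S_def)
    finally show ?thesis by simp
  qed
  from this[of a] this[of 0] show ?thesis by (simp add: psum_def)
qed

lemma prob_psum_diff:
  assumes "a \<le> b"
  shows "prob {\<omega>\<in>space M. psum X b \<omega> - psum X a \<omega> \<in> R} = prob {\<omega>\<in>space M. psum X (b - a) \<omega> \<in> R}"
  using prob_shifted_sum[of a "b - a" R] by (simp add: psum_diff[OF assms])

text \<open>The \<open>N\<close> consecutive integers from \<open>-i\<close> lie in \<open>[-i, i]\<close>, and their residue classes are
  disjoint events.\<close>
lemma qmin_le_inverse:
  assumes "0 < N" "1 \<le> i" "N \<le> 2 * i + 1"
  shows "qmin M X N i \<le> 1 / real N"
proof -
  let ?E = "\<lambda>c. {\<omega>\<in>space M. psum X i \<omega> \<in> resclass (int N) c}"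
  define C where "C = {- int i ..< - int i + int N}"
  have "C \<subseteq> {- int i .. int i}"
    using assms(3) by (auto simp: C_def)
  then have le: "qmin M X N i \<le> prob (?E c)" if "c \<in> C" for c
    using assms(2) that unfolding qmin_def by (auto intro!: Min_le)
  have "real N * qmin M X N i = (\<Sum>c\<in>C. qmin M X N i)"
    by (simp add: C_def)
  also have "\<dots> \<le> (\<Sum>c\<in>C. prob (?E c))"
    by (rule sum_mono) (rule le)
  also have "\<dots> = prob (\<Union>c\<in>C. ?E c)"
  proof (rule finite_measure_finite_Union[symmetric])
    show "?E ` C \<subseteq> events"
      by (auto intro!: events_depends_on[of "{1..i}"] depends_on_comp[OF depends_on_psum])
    show "disjoint_family_on ?E C"
      unfolding disjoint_family_on_def
    proof (intro ballI impI)
      fix c c' assume cc: "c \<in> C" "c' \<in> C" "c \<noteq> c'"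
      have "c mod int N \<noteq> c' mod int N"
      proof
        assume "c mod int N = c' mod int N"
        then have "(c + int i) mod int N = (c' + int i) mod int N" by (metis mod_add_cong)
        moreover have "(c + int i) mod int N = c + int i" "(c' + int i) mod int N = c' + int i"
          using cc by (auto simp: C_def)
        ultimately show False using cc by simp
      qed
      then show "?E c \<inter> ?E c' = {}"
        using assms(1) by (auto simp: mem_resclass_iff)
    qed
  qed (simp add: C_def)
  also have "\<dots> \<le> 1" by (rule prob_le_1)
  finally show ?thesis using assms(1) by (simp add: field_simps)
qed

end

section \<open>Offsets of the walk from the target sequence\<close>

locale target_walk = iid_sequence +
  fixes N :: nat and y :: "nat \<Rightarrow> int"
  assumes two_le_N: "2 \<le> N"
    and y_step: "\<forall>n\<in>{1..<N}. \<bar>y n - y (Suc n)\<bar> \<le> 1"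
begin

definition offset :: "nat \<Rightarrow> 'a \<Rightarrow> int" where
  "offset n \<omega> = (y n - psum X n \<omega>) mod int N"

definition first_event :: "nat \<Rightarrow> 'a set" where
  "first_event k = {\<omega>\<in>space M. k \<in> first_occurrences (\<lambda>n. offset n \<omega>) {1..N}}"

definition last_event :: "nat \<Rightarrow> 'a set" where
  "last_event k = {\<omega>\<in>space M. k \<in> last_occurrences (\<lambda>n. offset n \<omega>) {1..N}}"

definition repeat_event :: "nat \<Rightarrow> nat \<Rightarrow> 'a set" where
  "repeat_event a b = {\<omega>\<in>space M. offset a \<omega> = offset b \<omega>}"

lemma offset_eq_iff:
  "offset a \<omega> = offset b \<omega> \<longleftrightarrow> (psum X b \<omega> - psum X a \<omega>) mod int N = (y b - y a) mod int N"
  unfolding offset_def mod_eq_dvd_iff by (simp add: algebra_simps)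

lemma depends_on_offset: "depends_on X {1..n} (offset n)"
  unfolding offset_def by (rule depends_on_comp[OF depends_on_psum])

lemma depends_on_offset_eq: "a \<le> b \<Longrightarrow> depends_on X {a<..b} (\<lambda>\<omega>. offset a \<omega> = offset b \<omega>)"
  unfolding depends_on_def offset_eq_iff
proof (intro allI impI)
  fix \<omega> \<omega>' assume ab: "a \<le> b" and eq: "\<forall>i\<in>{a<..b}. X i \<omega> = X i \<omega>'"
  have "(\<Sum>j\<in>{1..b - a}. X (a + j) \<omega>) = (\<Sum>j\<in>{1..b - a}. X (a + j) \<omega>')"
    using eq by (intro sum.cong) auto
  then have "psum X b \<omega> - psum X a \<omega> = psum X b \<omega>' - psum X a \<omega>'"
    by (simp only: psum_diff[OF ab])
  then show "(psum X b \<omega> - psum X a \<omega>) mod int N = (y b - y a) mod int N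
      \<longleftrightarrow> (psum X b \<omega>' - psum X a \<omega>') mod int N = (y b - y a) mod int N"
    by simp
qed

lemma depends_on_first_event: "depends_on X {1..k} (\<lambda>\<omega>. k \<in> first_occurrences (\<lambda>n. offset n \<omega>) {1..N})"
  unfolding depends_on_def
proof (intro allI impI)
  fix \<omega> \<omega>' assume "\<forall>i\<in>{1..k}. X i \<omega> = X i \<omega>'"
  then have "offset j \<omega> = offset j \<omega>'" if "j \<le> k" for j
    using depends_on_offset[of j] that unfolding depends_on_def by auto
  then show "k \<in> first_occurrences (\<lambda>n. offset n \<omega>) {1..N} \<longleftrightarrow> k \<in> first_occurrences (\<lambda>n. offset n \<omega>') {1..N}"
    by (auto simp: first_occurrences_def)
qed

lemma depends_on_last_event: "depends_on X {k<..N} (\<lambda>\<omega>. k \<in> last_occurrences (\<lambda>n. offset n \<omega>) {1..N})"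
  unfolding depends_on_def
proof (intro allI impI)
  fix \<omega> \<omega>' assume eq: "\<forall>i\<in>{k<..N}. X i \<omega> = X i \<omega>'"
  have "offset j \<omega> = offset k \<omega> \<longleftrightarrow> offset j \<omega>' = offset k \<omega>'" if "k < j" "j \<le> N" for j
  proof -
    have "\<forall>i\<in>{k<..j}. X i \<omega> = X i \<omega>'"
      using eq that by auto
    with depends_on_offset_eq[OF less_imp_le[OF that(1)]]
    have "offset k \<omega> = offset j \<omega> \<longleftrightarrow> offset k \<omega>' = offset j \<omega>'"
      unfolding depends_on_def by blast
    then show ?thesis by argo
  qed
  then show "k \<in> last_occurrences (\<lambda>n. offset n \<omega>) {1..N} \<longleftrightarrow> k \<in> last_occurrences (\<lambda>n. offset n \<omega>') {1..N}"
    by (auto simp: last_occurrences_def)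
qed

lemma first_event_in_events: "first_event k \<in> events"
  unfolding first_event_def by (rule events_depends_on[OF _ _ depends_on_first_event]) auto

lemma last_event_in_events: "last_event k \<in> events"
  unfolding last_event_def by (rule events_depends_on[OF _ _ depends_on_last_event]) auto

lemma repeat_event_in_events: "a \<le> b \<Longrightarrow> repeat_event a b \<in> events"
  unfolding repeat_event_def by (rule events_depends_on[OF _ _ depends_on_offset_eq]) auto

lemma prob_first_repeat_event:
  assumes "k \<le> m"
  shows "prob (first_event k \<inter> repeat_event k m) = prob (first_event k) * prob (repeat_event k m)"
proof -
  have "first_event k \<inter> repeat_event k m = {\<omega>\<in>space M.
      k \<in> first_occurrences (\<lambda>n. offset n \<omega>) {1..N} \<and> offset k \<omega> = offset m \<omega>}"
    by (auto simp: first_event_def repeat_event_def)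
  also have "prob \<dots> = prob (first_event k) * prob (repeat_event k m)"
    unfolding first_event_def repeat_event_def
    by (rule prob_conj_depends_on_disjoint[OF indep _ _ _ _ _ depends_on_first_event depends_on_offset_eq[OF assms]])
      auto
  finally show ?thesis .
qed

lemma prob_last_repeat_event:
  assumes "m \<le> k"
  shows "prob (last_event k \<inter> repeat_event m k) = prob (last_event k) * prob (repeat_event m k)"
proof -
  have "last_event k \<inter> repeat_event m k = {\<omega>\<in>space M.
      k \<in> last_occurrences (\<lambda>n. offset n \<omega>) {1..N} \<and> offset m \<omega> = offset k \<omega>}"
    by (auto simp: last_event_def repeat_event_def)
  also have "prob \<dots> = prob (last_event k) * prob (repeat_event m k)"
    unfolding last_event_def repeat_event_def
    by (rule prob_conj_depends_on_disjoint[OF indep _ _ _ _ _ depends_on_last_event depends_on_offset_eq[OF assms]])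
      auto
  finally show ?thesis .
qed

lemma abs_y_diff_le: "1 \<le> a \<Longrightarrow> a \<le> b \<Longrightarrow> b \<le> N \<Longrightarrow> \<bar>y b - y a\<bar> \<le> int (b - a)"
proof (induction b)
  case (Suc b)
  show ?case
  proof (cases "a = Suc b")
    case False
    then have "a \<le> b" using Suc.prems by simp
    moreover have "\<bar>y b - y (Suc b)\<bar> \<le> 1" using y_step Suc.prems \<open>a \<le> b\<close> by auto
    ultimately show ?thesis using Suc by auto
  qed simp
qed simp

lemma prob_repeat_event:
  assumes "a \<le> b"
  shows "prob (repeat_event a b) = prob {\<omega>\<in>space M. psum X (b - a) \<omega> \<in> resclass (int N) (y b - y a)}"
proof -
  have "repeat_event a b = {\<omega>\<in>space M. psum X b \<omega> - psum X a \<omega> \<in> resclass (int N) (y b - y a)}"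
    using two_le_N by (auto simp: repeat_event_def offset_eq_iff mem_resclass_iff)
  then show ?thesis by (simp add: prob_psum_diff[OF assms])
qed

lemma qmin_le_prob_repeat_event:
  assumes "1 \<le> a" "a \<le> b" "b \<le> N"
  shows "qmin M X N (b - a) \<le> prob (repeat_event a b)"
proof (cases "a = b")
  case True
  then show ?thesis by (simp add: qmin_def repeat_event_def prob_space)
next
  case False
  then have "b - a \<noteq> 0" using assms(2) by simp
  moreover have "y b - y a \<in> {- int (b - a) .. int (b - a)}"
    using abs_y_diff_le[OF assms] by auto
  ultimately show ?thesis
    unfolding prob_repeat_event[OF assms(2)] qmin_def by (simp add: Min_le)
qed

lemma prob_repeat_event_le_pmax:
  assumes "1 \<le> a" "a \<le> b" "b \<le> N"
  shows "prob (repeat_event a b) \<le> pmax M X N (b - a)"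
proof (cases "a = b")
  case True
  then show ?thesis by (simp add: pmax_def repeat_event_def prob_space)
next
  case False
  then have "b - a \<noteq> 0" using assms(2) by simp
  moreover have "y b - y a \<in> {- int (b - a) .. int (b - a)}"
    using abs_y_diff_le[OF assms] by auto
  ultimately show ?thesis
    unfolding prob_repeat_event[OF assms(2)] pmax_def by (simp add: Max_ge)
qed

lemma sum_first_occurrences_offsets:
  fixes f :: "nat \<Rightarrow> real"
  assumes "\<omega> \<in> space M"
  shows "(\<Sum>k\<in>first_occurrences (\<lambda>n. offset n \<omega>) {1..N}. f k) = (\<Sum>k\<in>{1..N}. f k * indicator (first_event k) \<omega>)"
proof -
  have "first_occurrences (\<lambda>n. offset n \<omega>) {1..N} = {1..N} \<inter> {k. \<omega> \<in> first_event k}"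
    using assms by (auto simp: first_event_def first_occurrences_def)
  then show ?thesis by (simp add: Int_def)
qed

lemma sum_last_occurrences_offsets:
  fixes f :: "nat \<Rightarrow> real"
  assumes "\<omega> \<in> space M"
  shows "(\<Sum>k\<in>last_occurrences (\<lambda>n. offset n \<omega>) {1..N}. f k) = (\<Sum>k\<in>{1..N}. f k * indicator (last_event k) \<omega>)"
proof -
  have "last_occurrences (\<lambda>n. offset n \<omega>) {1..N} = {1..N} \<inter> {k. \<omega> \<in> last_event k}"
    using assms by (auto simp: last_event_def last_occurrences_def)
  then show ?thesis by (simp add: Int_def)
qed

lemma card_offsets_eq_sum_first_event:
  assumes "\<omega> \<in> space M"
  shows "real (card ((\<lambda>n. offset n \<omega>) ` {1..N})) = (\<Sum>k\<in>{1..N}. indicator (first_event k) \<omega>)"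
proof -
  have "card ((\<lambda>n. offset n \<omega>) ` {1..N}) = card (first_occurrences (\<lambda>n. offset n \<omega>) {1..N})"
    by (rule bij_betw_same_card[OF bij_betw_first_occurrences, symmetric]) simp
  then show ?thesis
    using sum_first_occurrences_offsets[OF assms, of "\<lambda>_. 1"] by simp
qed

lemma real_N_eq_sum_first_repeat_indicator:
  assumes "\<omega> \<in> space M"
  shows "real N = (\<Sum>k\<in>{1..N}. \<Sum>m\<in>{k..N}. indicator (first_event k \<inter> repeat_event k m) \<omega>)"
proof -
  let ?V = "\<lambda>n. offset n \<omega>"
  have "real N = real (\<Sum>k\<in>first_occurrences ?V {1..N}. card {m\<in>{1..N}. k \<le> m \<and> ?V m = ?V k})"
    by (subst sum_first_occurrences_card_later) simp_all
  also have "\<dots> = (\<Sum>k\<in>{1..N}. real (card {m\<in>{1..N}. k \<le> m \<and> ?V m = ?V k}) * indicator (first_event k) \<omega>)"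
    unfolding of_nat_sum by (rule sum_first_occurrences_offsets[OF assms])
  also have "\<dots> = (\<Sum>k\<in>{1..N}. \<Sum>m\<in>{k..N}. indicator (first_event k \<inter> repeat_event k m) \<omega>)"
  proof (rule sum.cong[OF refl])
    fix k assume "k \<in> {1..N}"
    then have "{m\<in>{1..N}. k \<le> m \<and> ?V m = ?V k} = {k..N} \<inter> {m. \<omega> \<in> repeat_event k m}"
      using assms by (auto simp: repeat_event_def)
    then have "real (card {m\<in>{1..N}. k \<le> m \<and> ?V m = ?V k}) = (\<Sum>m\<in>{k..N}. indicator (repeat_event k m) \<omega>)"
      by (simp add: indicator_def)
    then show "real (card {m\<in>{1..N}. k \<le> m \<and> ?V m = ?V k}) * indicator (first_event k) \<omega>
        = (\<Sum>m\<in>{k..N}. indicator (first_event k \<inter> repeat_event k m) \<omega>)"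
      by (simp only: sum_distrib_right indicator_inter_arith) (rule sum.cong[OF refl], rule mult.commute)
  qed
  finally show ?thesis .
qed

lemma real_N_eq_sum_last_repeat_indicator:
  assumes "\<omega> \<in> space M"
  shows "real N = (\<Sum>k\<in>{1..N}. \<Sum>m\<in>{1..k}. indicator (last_event k \<inter> repeat_event m k) \<omega>)"
proof -
  let ?V = "\<lambda>n. offset n \<omega>"
  have "real N = real (\<Sum>k\<in>last_occurrences ?V {1..N}. card {m\<in>{1..N}. m \<le> k \<and> ?V m = ?V k})"
    by (subst sum_last_occurrences_card_earlier) simp_all
  also have "\<dots> = (\<Sum>k\<in>{1..N}. real (card {m\<in>{1..N}. m \<le> k \<and> ?V m = ?V k}) * indicator (last_event k) \<omega>)"
    unfolding of_nat_sum by (rule sum_last_occurrences_offsets[OF assms])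
  also have "\<dots> = (\<Sum>k\<in>{1..N}. \<Sum>m\<in>{1..k}. indicator (last_event k \<inter> repeat_event m k) \<omega>)"
  proof (rule sum.cong[OF refl])
    fix k assume "k \<in> {1..N}"
    then have "{m\<in>{1..N}. m \<le> k \<and> ?V m = ?V k} = {1..k} \<inter> {m. \<omega> \<in> repeat_event m k}"
      using assms by (auto simp: repeat_event_def)
    then have "real (card {m\<in>{1..N}. m \<le> k \<and> ?V m = ?V k}) = (\<Sum>m\<in>{1..k}. indicator (repeat_event m k) \<omega>)"
      by (simp add: indicator_def)
    then show "real (card {m\<in>{1..N}. m \<le> k \<and> ?V m = ?V k}) * indicator (last_event k) \<omega>
        = (\<Sum>m\<in>{1..k}. indicator (last_event k \<inter> repeat_event m k) \<omega>)"
      by (simp only: sum_distrib_right indicator_inter_arith) (rule sum.cong[OF refl], rule mult.commute)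
  qed
  finally show ?thesis .
qed

lemma real_N_eq_sum_first_repeat:
  "real N = (\<Sum>k\<in>{1..N}. \<Sum>m\<in>{k..N}. prob (first_event k) * prob (repeat_event k m))"
proof -
  have "real N = (\<integral>\<omega>. real N \<partial>M)"
    by (simp add: prob_space)
  also have "\<dots> = (\<integral>\<omega>. (\<Sum>k\<in>{1..N}. \<Sum>m\<in>{k..N}. indicator (first_event k \<inter> repeat_event k m) \<omega>) \<partial>M)"
    by (rule Bochner_Integration.integral_cong[OF refl real_N_eq_sum_first_repeat_indicator])
  also have "\<dots> = (\<Sum>k\<in>{1..N}. \<Sum>m\<in>{k..N}. prob (first_event k \<inter> repeat_event k m))"
    by (rule integral_double_sum_indicator) (auto intro: first_event_in_events repeat_event_in_events)
  also have "\<dots> = (\<Sum>k\<in>{1..N}. \<Sum>m\<in>{k..N}. prob (first_event k) * prob (repeat_event k m))"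
    by (intro sum.cong refl prob_first_repeat_event) auto
  finally show ?thesis .
qed

lemma real_N_eq_sum_last_repeat:
  "real N = (\<Sum>k\<in>{1..N}. \<Sum>m\<in>{1..k}. prob (last_event k) * prob (repeat_event m k))"
proof -
  have "real N = (\<integral>\<omega>. real N \<partial>M)"
    by (simp add: prob_space)
  also have "\<dots> = (\<integral>\<omega>. (\<Sum>k\<in>{1..N}. \<Sum>m\<in>{1..k}. indicator (last_event k \<inter> repeat_event m k) \<omega>) \<partial>M)"
    by (rule Bochner_Integration.integral_cong[OF refl real_N_eq_sum_last_repeat_indicator])
  also have "\<dots> = (\<Sum>k\<in>{1..N}. \<Sum>m\<in>{1..k}. prob (last_event k \<inter> repeat_event m k))"
    by (rule integral_double_sum_indicator) (auto intro: last_event_in_events repeat_event_in_events)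
  also have "\<dots> = (\<Sum>k\<in>{1..N}. \<Sum>m\<in>{1..k}. prob (last_event k) * prob (repeat_event m k))"
    by (intro sum.cong refl prob_last_repeat_event) auto
  finally show ?thesis .
qed

lemma real_N_le_sum_first_mult_sum_pmax:
  "real N \<le> (\<Sum>k\<in>{1..N}. prob (first_event k)) * (\<Sum>i<N. pmax M X N i)"
proof -
  have "real N \<le> (\<Sum>k\<in>{1..N}. \<Sum>m\<in>{k..N}. prob (first_event k) * pmax M X N (m - k))"
    unfolding real_N_eq_sum_first_repeat
    by (intro sum_mono mult_left_mono prob_repeat_event_le_pmax) auto
  also have "\<dots> = (\<Sum>k\<in>{1..N}. prob (first_event k) * (\<Sum>i<Suc (N - k). pmax M X N i))"
  proof (rule sum.cong[OF refl])
    fix k assume "k \<in> {1..N}"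
    then show "(\<Sum>m\<in>{k..N}. prob (first_event k) * pmax M X N (m - k))
        = prob (first_event k) * (\<Sum>i<Suc (N - k). pmax M X N i)"
      by (simp only: sum_distrib_left[symmetric] sum_atLeastAtMost_shift_down atLeastAtMost_iff)
  qed
  also have "\<dots> \<le> (\<Sum>k\<in>{1..N}. prob (first_event k) * (\<Sum>i<N. pmax M X N i))"
    by (intro sum_mono mult_left_mono sum_mono2) (auto intro: pmax_nonneg)
  finally show ?thesis
    by (simp add: sum_distrib_right)
qed

definition qsum :: "nat \<Rightarrow> real" where
  "qsum t = (\<Sum>i<t. qmin M X N i)"

lemma qsum_mono: "s \<le> t \<Longrightarrow> qsum s \<le> qsum t"
  unfolding qsum_def by (rule sum_mono2) (auto intro: qmin_nonneg)

lemma qsum_le_add_one: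
  assumes "t \<le> N" "N \<le> 2 * t + 1"
  shows "qsum N \<le> qsum t + 1"
proof -
  have "qsum N = qsum t + (\<Sum>i\<in>{t..<N}. qmin M X N i)"
    unfolding qsum_def lessThan_atLeast0 using assms(1) by (simp add: sum.atLeastLessThan_concat)
  also have "(\<Sum>i\<in>{t..<N}. qmin M X N i) \<le> (\<Sum>i\<in>{t..<N}. 1 / real N)"
    using assms two_le_N by (intro sum_mono qmin_le_inverse) auto
  also have "\<dots> \<le> 1"
    using two_le_N by (simp add: field_simps)
  finally show ?thesis by simp
qed

lemma qsum_le_split:
  assumes "b \<in> {1..N}"
  shows "qsum N \<le> qsum (Suc (N - b)) + qsum b"
proof (cases "N \<le> 2 * b")
  case True
  then have "qsum N \<le> qsum b + 1"
    using assms by (intro qsum_le_add_one) auto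
  moreover have "1 \<le> qsum (Suc (N - b))"
    unfolding qsum_def by (rule one_le_sum_qmin) simp
  ultimately show ?thesis by simp
next
  case False
  then have "qsum N \<le> qsum (Suc (N - b)) + 1"
    using assms by (intro qsum_le_add_one) auto
  moreover have "1 \<le> qsum b"
    unfolding qsum_def using assms by (intro one_le_sum_qmin) simp
  ultimately show ?thesis by simp
qed

lemma sum_first_mult_qsum_le:
  "(\<Sum>k\<in>{1..N}. prob (first_event k) * qsum (Suc (N - k))) \<le> real N"
proof -
  have "(\<Sum>k\<in>{1..N}. prob (first_event k) * qsum (Suc (N - k)))
      = (\<Sum>k\<in>{1..N}. \<Sum>m\<in>{k..N}. prob (first_event k) * qmin M X N (m - k))"
  proof (rule sum.cong[OF refl])
    fix k assume "k \<in> {1..N}"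
    then show "prob (first_event k) * qsum (Suc (N - k)) = (\<Sum>m\<in>{k..N}. prob (first_event k) * qmin M X N (m - k))"
      by (simp only: qsum_def sum_distrib_left[symmetric] sum_atLeastAtMost_shift_down atLeastAtMost_iff)
  qed
  also have "\<dots> \<le> (\<Sum>k\<in>{1..N}. \<Sum>m\<in>{k..N}. prob (first_event k) * prob (repeat_event k m))"
    by (intro sum_mono mult_left_mono qmin_le_prob_repeat_event) auto
  finally show ?thesis
    unfolding real_N_eq_sum_first_repeat[symmetric] .
qed

lemma sum_last_mult_qsum_le:
  "(\<Sum>k\<in>{1..N}. prob (last_event k) * qsum k) \<le> real N"
proof -
  have "(\<Sum>k\<in>{1..N}. prob (last_event k) * qsum k)
      = (\<Sum>k\<in>{1..N}. \<Sum>m\<in>{1..k}. prob (last_event k) * qmin M X N (k - m))"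
    by (simp only: qsum_def sum_distrib_left[symmetric] sum_atLeastAtMost_reflect)
  also have "\<dots> \<le> (\<Sum>k\<in>{1..N}. \<Sum>m\<in>{1..k}. prob (last_event k) * prob (repeat_event m k))"
    by (intro sum_mono mult_left_mono qmin_le_prob_repeat_event) auto
  finally show ?thesis
    unfolding real_N_eq_sum_last_repeat[symmetric] .
qed

lemma sum_first_mult_qsum_le_sum_first_last:
  "(\<Sum>k\<in>{1..N}. prob (first_event k)) * qsum N
    \<le> (\<Sum>k\<in>{1..N}. prob (first_event k) * qsum (Suc (N - k))) + (\<Sum>k\<in>{1..N}. prob (last_event k) * qsum k)"
proof -
  let ?L = "\<lambda>\<omega>. \<Sum>k\<in>{1..N}. qsum N * indicator (first_event k) \<omega>"
  let ?F = "\<lambda>\<omega>. \<Sum>k\<in>{1..N}. qsum (Suc (N - k)) * indicator (first_event k) \<omega>"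
  let ?G = "\<lambda>\<omega>. \<Sum>k\<in>{1..N}. qsum k * indicator (last_event k) \<omega>"
  have int: "integrable M ?L" "integrable M ?F" "integrable M ?G"
    by (rule integral_sum_indicator(1); simp add: first_event_in_events last_event_in_events)+
  have "?L \<omega> \<le> ?F \<omega> + ?G \<omega>" if "\<omega> \<in> space M" for \<omega>
  proof -
    have "?L \<omega> = real (card ((\<lambda>n. offset n \<omega>) ` {1..N})) * qsum N"
      by (simp only: card_offsets_eq_sum_first_event[OF that] sum_distrib_left mult.commute[of _ "qsum N"])
    also have "\<dots> \<le> (\<Sum>k\<in>first_occurrences (\<lambda>n. offset n \<omega>) {1..N}. qsum (Suc (N - k)))
        + (\<Sum>k\<in>last_occurrences (\<lambda>n. offset n \<omega>) {1..N}. qsum k)"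
    proof (rule card_image_mult_le_sum_first_last)
      fix k l assume "k \<in> {1..N}" "l \<in> {1..N}" "k \<le> l"
      then show "qsum N \<le> qsum (Suc (N - k)) + qsum l"
        using qsum_le_split[of l] qsum_mono[of "Suc (N - l)" "Suc (N - k)"] by (auto simp: diff_le_mono2)
    qed simp
    also have "\<dots> = ?F \<omega> + ?G \<omega>"
      by (simp only: sum_first_occurrences_offsets[OF that] sum_last_occurrences_offsets[OF that])
    finally show ?thesis .
  qed
  then have "(\<integral>\<omega>. ?L \<omega> \<partial>M) \<le> (\<integral>\<omega>. ?F \<omega> + ?G \<omega> \<partial>M)"
    by (intro integral_mono int Bochner_Integration.integrable_add)
  also have "\<dots> = (\<integral>\<omega>. ?F \<omega> \<partial>M) + (\<integral>\<omega>. ?G \<omega> \<partial>M)"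
    by (rule Bochner_Integration.integral_add[OF int(2,3)])
  finally show ?thesis
    by (simp only: integral_sum_indicator(2) first_event_in_events last_event_in_events finite_atLeastAtMost)
      (simp add: sum_distrib_left mult.commute)
qed

lemma sum_first_mult_sum_qmin_le:
  "(\<Sum>k\<in>{1..N}. prob (first_event k)) * (\<Sum>i<N. qmin M X N i) \<le> 2 * real N"
  using sum_first_mult_qsum_le_sum_first_last sum_first_mult_qsum_le sum_last_mult_qsum_le
  unfolding qsum_def by linarith

definition hits :: "int \<Rightarrow> 'a \<Rightarrow> bool" where
  "hits z \<omega> \<longleftrightarrow> (\<exists>n\<in>{1..N}. (z + psum X n \<omega>) mod int N = y n mod int N)"

lemma depends_on_hits: "depends_on X {1..N} (hits z)"
  unfolding depends_on_def
proof (intro allI impI)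
  fix \<omega> \<omega>' assume "\<forall>i\<in>{1..N}. X i \<omega> = X i \<omega>'"
  then have "psum X n \<omega> = psum X n \<omega>'" if "n \<in> {1..N}" for n
    using that unfolding psum_def by (intro sum.cong) auto
  then show "hits z \<omega> = hits z \<omega>'"
    unfolding hits_def by auto
qed

lemma sets_pair_hits:
  assumes X0: "X0 \<in> MN \<rightarrow>\<^sub>M count_space UNIV"
  shows "{p\<in>space (MN \<Otimes>\<^sub>M M). hits (X0 (fst p)) (snd p)} \<in> sets (MN \<Otimes>\<^sub>M M)"
proof -
  have "hits z \<in> M \<rightarrow>\<^sub>M count_space UNIV" for z
    by (rule measurable_depends_on_X[OF _ _ depends_on_hits]) auto
  then have "(\<lambda>p. hits z (snd p)) \<in> MN \<Otimes>\<^sub>M M \<rightarrow>\<^sub>M count_space UNIV" for z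
    by (rule measurable_compose[OF measurable_snd])
  then have "(\<lambda>p. hits (X0 (fst p)) (snd p)) \<in> MN \<Otimes>\<^sub>M M \<rightarrow>\<^sub>M count_space UNIV"
    by (rule measurable_compose_countable[OF _ measurable_compose[OF measurable_fst X0]])
  from measurable_sets[OF this, of "{True}"] show ?thesis
    by (simp add: vimage_def Int_def conj_commute)
qed

lemma hits_section_eq_offsets:
  assumes "\<omega> \<in> space M"
  shows "{0..<int N} \<inter> {z. hits z \<omega>} = (\<lambda>n. offset n \<omega>) ` {1..N}"
proof -
  have hit_iff: "(z + psum X n \<omega>) mod int N = y n mod int N \<longleftrightarrow> z mod int N = offset n \<omega>" for z n
    unfolding offset_def mod_eq_dvd_iff by (simp add: algebra_simps)
  have offset_range: "offset n \<omega> \<in> {0..<int N}" for n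
    using two_le_N by (simp add: offset_def)
  show ?thesis
  proof (intro set_eqI iffI)
    fix z assume "z \<in> {0..<int N} \<inter> {z. hits z \<omega>}"
    then obtain n where "n \<in> {1..N}" "z mod int N = offset n \<omega>" "z \<in> {0..<int N}"
      by (auto simp: hits_def hit_iff)
    then show "z \<in> (\<lambda>n. offset n \<omega>) ` {1..N}" by auto
  next
    fix z assume "z \<in> (\<lambda>n. offset n \<omega>) ` {1..N}"
    then obtain n where "n \<in> {1..N}" "z = offset n \<omega>" by auto
    moreover have "offset n \<omega> mod int N = offset n \<omega>"
      by (simp add: offset_def)
    ultimately show "z \<in> {0..<int N} \<inter> {z. hits z \<omega>}"
      using offset_range hit_iff by (auto simp: hits_def)
  qed
qed

lemma prob_hits_section:
  assumes MN: "prob_space MN" and X0: "X0 \<in> MN \<rightarrow>\<^sub>M count_space UNIV"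
    and uniform: "distr MN (count_space UNIV) X0 = measure_pmf (pmf_of_set {0..<int N})"
    and "\<omega> \<in> space M"
  shows "measure MN {x\<in>space MN. hits (X0 x) \<omega>} = real (card ((\<lambda>n. offset n \<omega>) ` {1..N})) / real N"
proof -
  have "measure MN {x\<in>space MN. hits (X0 x) \<omega>} = measure (distr MN (count_space UNIV) X0) {z. hits z \<omega>}"
    by (subst measure_distr[OF X0]) (auto intro!: arg_cong[where f="measure MN"])
  also have "\<dots> = real (card ((\<lambda>n. offset n \<omega>) ` {1..N})) / real N"
    using two_le_N hits_section_eq_offsets[OF assms(4)] by (simp add: uniform measure_pmf_of_set)
  finally show ?thesis .
qed

lemma measure_hitting_event:
  fixes MN :: "'b measure" and X0 :: "'b \<Rightarrow> int"
  assumes MN: "prob_space MN" and X0: "X0 \<in> MN \<rightarrow>\<^sub>M count_space UNIV"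
    and uniform: "distr MN (count_space UNIV) X0 = measure_pmf (pmf_of_set {0..<int N})"
  shows "measure (MN \<Otimes>\<^sub>M M) {(x, \<omega>) \<in> space (MN \<Otimes>\<^sub>M M).
      \<exists>n\<in>{1..N}. (X0 x + psum X n \<omega>) mod int N = y n mod int N}
    = (\<Sum>k\<in>{1..N}. prob (first_event k)) / real N"
proof -
  interpret MN: prob_space MN by (rule MN)
  interpret pair: pair_prob_space MN M ..
  define B where "B = {p\<in>space (MN \<Otimes>\<^sub>M M). hits (X0 (fst p)) (snd p)}"
  define g where "g \<omega> = (\<Sum>k\<in>{1..N}. (1 / real N) * indicator (first_event k) \<omega>)" for \<omega>
  have B: "B \<in> sets (MN \<Otimes>\<^sub>M M)"
    unfolding B_def by (rule sets_pair_hits[OF X0])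
  have "emeasure MN ((\<lambda>x. (x, \<omega>)) -` B) = ennreal (g \<omega>)" if "\<omega> \<in> space M" for \<omega>
  proof -
    have "(\<lambda>x. (x, \<omega>)) -` B = {x\<in>space MN. hits (X0 x) \<omega>}"
      using that by (auto simp: B_def space_pair_measure)
    then show ?thesis
      using prob_hits_section[OF assms that] card_offsets_eq_sum_first_event[OF that]
      by (simp add: MN.emeasure_eq_measure g_def sum_divide_distrib)
  qed
  then have "emeasure (MN \<Otimes>\<^sub>M M) B = (\<integral>\<^sup>+\<omega>. ennreal (g \<omega>) \<partial>M)"
    by (simp add: pair.emeasure_pair_measure_alt2[OF B] cong: nn_integral_cong)
  also have "\<dots> = ennreal (integral\<^sup>L M g)"
  proof (rule nn_integral_eq_integral)
    show "integrable M g"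
      unfolding g_def by (rule integral_sum_indicator(1)) (simp_all add: first_event_in_events)
  qed (simp add: g_def sum_nonneg)
  finally have "measure (MN \<Otimes>\<^sub>M M) B = integral\<^sup>L M g"
    unfolding measure_def by (simp add: g_def integral_nonneg sum_nonneg)
  also have "\<dots> = (\<Sum>k\<in>{1..N}. prob (first_event k)) / real N"
    unfolding g_def by (simp only: integral_sum_indicator(2) first_event_in_events finite_atLeastAtMost)
      (simp add: sum_divide_distrib)
  also have "B = {(x, \<omega>) \<in> space (MN \<Otimes>\<^sub>M M). \<exists>n\<in>{1..N}. (X0 x + psum X n \<omega>) mod int N = y n mod int N}"
    by (auto simp: B_def hits_def)
  finally show ?thesis .
qed
end

theorem proposition3:
  fixes M :: "'a measure" and X :: "nat \<Rightarrow> 'a \<Rightarrow> int"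
    and MN :: "'b measure" and X0 :: "'b \<Rightarrow> int"
    and N :: nat and y :: "nat \<Rightarrow> int"
  assumes "prob_space M"
    and "prob_space.indep_vars M (\<lambda>_. count_space UNIV) X {1..}"
    and "\<forall>j\<ge>1. distr M (count_space UNIV) (X j) = distr M (count_space UNIV) (X 1)"
    and "prob_space MN"
    and "X0 \<in> measurable MN (count_space UNIV)"
    and "distr MN (count_space UNIV) X0 = measure_pmf (pmf_of_set {0..<int N})"
    and "N \<ge> 2"
    and "\<forall>n\<in>{1..<N}. \<bar>y n - y (Suc n)\<bar> \<le> 1"
  shows "1 / (\<Sum>i<N. pmax M X N i)
           \<le> measure (MN \<Otimes>\<^sub>M M)
               {(x, \<omega>) \<in> space (MN \<Otimes>\<^sub>M M).
                  \<exists>n\<in>{1..N}. (X0 x + psum X n \<omega>) mod int N = y n mod int N}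
        \<and> measure (MN \<Otimes>\<^sub>M M)
               {(x, \<omega>) \<in> space (MN \<Otimes>\<^sub>M M).
                  \<exists>n\<in>{1..N}. (X0 x + psum X n \<omega>) mod int N = y n mod int N}
           \<le> 2 / (\<Sum>i<N. qmin M X N i)"
proof -
  interpret target_walk M X N y
    by (intro target_walk.intro iid_sequence.intro iid_sequence_axioms.intro target_walk_axioms.intro
        assms(1-3,7,8))
  let ?E = "\<Sum>k\<in>{1..N}. prob (first_event k)"
  have N: "0 < real N" using assms(7) by simp
  have "1 / (\<Sum>i<N. pmax M X N i) \<le> ?E / real N"
    using real_N_le_sum_first_mult_sum_pmax one_le_sum_pmax[of N M X N] N
    by (simp add: divide_simps)
  moreover have "?E / real N \<le> 2 / (\<Sum>i<N. qmin M X N i)"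
    using sum_first_mult_sum_qmin_le one_le_sum_qmin[of N M X N] N
    by (simp add: divide_simps)
  ultimately show ?thesis
    unfolding measure_hitting_event[OF assms(4-6)] by simp
qed

end
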